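(* Part 1. Each preorder $(B,\le)$ yields a fibrous preorder $E(B,\le)=(R,B,B,1_B,\partial)$, with $xRy\iff x\le y$ and $\partial(x,y)=y$. Each monotone map $f\colon(B,\le)\to(B',\le')$ yields a fibrous morphism $E(f)=(f,f^* )$ with $f^*(f(b),b)=b$. This defines an embedding of the category of preorders and monotone maps into the category of fibrous preorders and fibrous morphisms. Part 2. A fibrous preorder $(R,A,B,p,\partial)$ is equivalent to one of the form $E(B,\le)$ if and only if there exists a map $u\colon B\to A$ with $pu=1_B$ such that $up(a)Ry\Rightarrow aRy$ for all $a\in A$ and $y\in B$. Part 3. In that case, define $xR^\circ y\iff u(x)Ry$ for $x,y\in B$. Then $R^\circ$ is a preorder (reflexive and transitive) on $B$, and $(R,A,B,p,\partial)$ is equivalent to $E(B,R^\circ)$.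
   Context: A fibrous preorder is a sequence $R\xrightarrow{\partial}A\xrightarrow{p}B$ consisting of the following data: - sets $A$ and $B$; - a map $p\colon A\to B$; - a relation $R\subseteq A\times B$ (write $aRb$ for $(a,b)\in R$); - a map $\partial\colon R\to A$. These must satisfy, for all $a\in A$ and $b,y\in B$ with $aRb$: - (F1) $p\partial(a,b)=b$; - (F2) $aRp(a)$ (this holds for all $a\in A$); - (F3) $\partial(a,b)Ry\Rightarrow aRy$. Given fibrous preorders $\mathbf{A}=(R,A,B,p,\partial)$ and $\mathbf{A}'=(R',A',B',p',\partial')$, a fibrous morphism $\mathbf{A}\to\mathbf{A}'$ is a pair $(f,f^* )$ with $f\colon B\to B'$ a map and $f^*\colon A'_f\to A$ a map, where $A'_f=\{(a',b)\in A'\times B\mid p'(a')=f(b)\}$. These must satisfy, for all $(a',b)\in A'_f$ and $y\in B$: - $pf^*(a',b)=b$; - $f^*(a',b)Ry\Rightarrow a'R'f(y)$. Composition is $(g,g^* )\circ(f,f^* )=(gf,h)$ with $h(a'',b)=f^*(g^*(a'',f(b)),b)$. Two fibrous preorders $(R,A,B,p,\partial)$ and $(R',A',B',p',\partial')$ are equivalent if $B=B'$ and there exist maps $\varphi\colon A\to A'$ and $\gamma\colon A'\to A$ with $p'\varphi=p$ and $p\gamma=p'$ such that, for all $a\in A$, $a'\in A'$ and $b\in B$, $\varphi(a)R'b\Rightarrow aRb$ and $\gamma(a')Rb\Rightarrow a'R'b$. *)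

theory Defs
  imports Main
begin

text \<open>A fibrous preorder R -d-> A -p-> B is represented by carrier sets A, B,
  a map p (meaningful on A), a relation R given as a predicate which must be a
  subset of A x B, and a map d (meaningful on R).\<close>

definition fibrous_preorder ::
  "'a set \<Rightarrow> 'b set \<Rightarrow> ('a \<Rightarrow> 'b) \<Rightarrow> ('a \<Rightarrow> 'b \<Rightarrow> bool) \<Rightarrow> ('a \<Rightarrow> 'b \<Rightarrow> 'a) \<Rightarrow> bool" where
  "fibrous_preorder A B p R d \<longleftrightarrow>
     (\<forall>a\<in>A. p a \<in> B) \<and>
     (\<forall>a b. R a b \<longrightarrow> a \<in> A \<and> b \<in> B) \<and>
     (\<forall>a b. R a b \<longrightarrow> d a b \<in> A) \<and>
     (\<forall>a b. R a b \<longrightarrow> p (d a b) = b) \<and>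
     (\<forall>a\<in>A. R a (p a)) \<and>
     (\<forall>a b y. R a b \<longrightarrow> y \<in> B \<longrightarrow> R (d a b) y \<longrightarrow> R a y)"

text \<open>Fibrous morphism (f, fs) from (A,B,p,R,d) to (A',B',p',R',d');
  fs is meaningful on A'_f = {(a',b) | a' in A', b in B, p' a' = f b}.\<close>

definition fibrous_morphism ::
  "'a set \<Rightarrow> 'b set \<Rightarrow> ('a \<Rightarrow> 'b) \<Rightarrow> ('a \<Rightarrow> 'b \<Rightarrow> bool) \<Rightarrow> ('a \<Rightarrow> 'b \<Rightarrow> 'a) \<Rightarrow>
   'c set \<Rightarrow> 'd set \<Rightarrow> ('c \<Rightarrow> 'd) \<Rightarrow> ('c \<Rightarrow> 'd \<Rightarrow> bool) \<Rightarrow> ('c \<Rightarrow> 'd \<Rightarrow> 'c) \<Rightarrow>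
   ('b \<Rightarrow> 'd) \<Rightarrow> ('c \<Rightarrow> 'b \<Rightarrow> 'a) \<Rightarrow> bool" where
  "fibrous_morphism A B p R d A' B' p' R' d' f fs \<longleftrightarrow>
     (\<forall>b\<in>B. f b \<in> B') \<and>
     (\<forall>a'\<in>A'. \<forall>b\<in>B. p' a' = f b \<longrightarrow>
        fs a' b \<in> A \<and> p (fs a' b) = b \<and>
        (\<forall>y\<in>B. R (fs a' b) y \<longrightarrow> R' a' (f y)))"

definition fib_mor_eq ::
  "'b set \<Rightarrow> 'c set \<Rightarrow> ('c \<Rightarrow> 'd) \<Rightarrow> ('b \<Rightarrow> 'd) \<Rightarrow> ('c \<Rightarrow> 'b \<Rightarrow> 'a) \<Rightarrow>
   ('b \<Rightarrow> 'd) \<Rightarrow> ('c \<Rightarrow> 'b \<Rightarrow> 'a) \<Rightarrow> bool" where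
  "fib_mor_eq B A' p' f fs g gs \<longleftrightarrow>
     (\<forall>b\<in>B. f b = g b) \<and>
     (\<forall>a'\<in>A'. \<forall>b\<in>B. p' a' = f b \<longrightarrow> fs a' b = gs a' b)"

definition fib_id_star :: "'a \<Rightarrow> 'b \<Rightarrow> 'a" where
  "fib_id_star = (\<lambda>a b. a)"

definition fib_comp_star ::
  "('b \<Rightarrow> 'c) \<Rightarrow> ('c' \<Rightarrow> 'b \<Rightarrow> 'a) \<Rightarrow> ('c'' \<Rightarrow> 'c \<Rightarrow> 'c') \<Rightarrow> 'c'' \<Rightarrow> 'b \<Rightarrow> 'a" where
  "fib_comp_star f fs gs = (\<lambda>a'' b. fs (gs a'' (f b)) b)"

definition fibrous_equiv ::
  "'a set \<Rightarrow> 'b set \<Rightarrow> ('a \<Rightarrow> 'b) \<Rightarrow> ('a \<Rightarrow> 'b \<Rightarrow> bool) \<Rightarrow> ('a \<Rightarrow> 'b \<Rightarrow> 'a) \<Rightarrow>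
   'c set \<Rightarrow> 'b set \<Rightarrow> ('c \<Rightarrow> 'b) \<Rightarrow> ('c \<Rightarrow> 'b \<Rightarrow> bool) \<Rightarrow> ('c \<Rightarrow> 'b \<Rightarrow> 'c) \<Rightarrow> bool" where
  "fibrous_equiv A B p R d A' B' p' R' d' \<longleftrightarrow> B = B' \<and>
     (\<exists>\<phi> \<gamma>. (\<forall>a\<in>A. \<phi> a \<in> A' \<and> p' (\<phi> a) = p a) \<and>
            (\<forall>a'\<in>A'. \<gamma> a' \<in> A \<and> p (\<gamma> a') = p' a') \<and>
            (\<forall>a\<in>A. \<forall>b\<in>B. R' (\<phi> a) b \<longrightarrow> R a b) \<and>
            (\<forall>a'\<in>A'. \<forall>b\<in>B. R (\<gamma> a') b \<longrightarrow> R' a' b))"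

definition is_preorder :: "'b set \<Rightarrow> ('b \<Rightarrow> 'b \<Rightarrow> bool) \<Rightarrow> bool" where
  "is_preorder B le \<longleftrightarrow> (\<forall>x\<in>B. le x x) \<and>
     (\<forall>x\<in>B. \<forall>y\<in>B. \<forall>z\<in>B. le x y \<longrightarrow> le y z \<longrightarrow> le x z)"

definition monotone_betw ::
  "'b set \<Rightarrow> ('b \<Rightarrow> 'b \<Rightarrow> bool) \<Rightarrow> 'c set \<Rightarrow> ('c \<Rightarrow> 'c \<Rightarrow> bool) \<Rightarrow> ('b \<Rightarrow> 'c) \<Rightarrow> bool" where
  "monotone_betw B le B' le' f \<longleftrightarrow> (\<forall>x\<in>B. f x \<in> B') \<and>
     (\<forall>x\<in>B. \<forall>y\<in>B. le x y \<longrightarrow> le' (f x) (f y))"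

definition E_R :: "'b set \<Rightarrow> ('b \<Rightarrow> 'b \<Rightarrow> bool) \<Rightarrow> 'b \<Rightarrow> 'b \<Rightarrow> bool" where
  "E_R B le x y \<longleftrightarrow> x \<in> B \<and> y \<in> B \<and> le x y"

definition E_d :: "'b \<Rightarrow> 'b \<Rightarrow> 'b" where
  "E_d x y = y"

definition E_star :: "('b \<Rightarrow> 'c) \<Rightarrow> 'c \<Rightarrow> 'b \<Rightarrow> 'b" where
  "E_star f = (\<lambda>a' b. b)"

end

theory Submission
  imports Defs
begin

text \<open>A fibrous preorder comes from a preorder exactly when each fibre of p has an element
  whose relations imply those of every other element of the fibre; choosing such an element
  for each base point gives the section u, and x \<le> y :\<longleftrightarrow> u x R y is then a preorder by
  (F2) and (F3). The equivalence with E(B, \<le>) is witnessed by p and u themselves.\<close>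

definition initial_section ::
  "'a set \<Rightarrow> 'b set \<Rightarrow> ('a \<Rightarrow> 'b) \<Rightarrow> ('a \<Rightarrow> 'b \<Rightarrow> bool) \<Rightarrow> ('b \<Rightarrow> 'a) \<Rightarrow> bool" where
  "initial_section A B p R u \<longleftrightarrow>
     (\<forall>b\<in>B. u b \<in> A \<and> p (u b) = b) \<and> (\<forall>a\<in>A. \<forall>y\<in>B. R (u (p a)) y \<longrightarrow> R a y)"

lemma fibrous_preorder_E:
  assumes "is_preorder B le"
  shows "fibrous_preorder B B id (E_R B le) E_d"
  using assms unfolding is_preorder_def fibrous_preorder_def E_R_def E_d_def by auto

lemma fibrous_morphism_E:
  assumes "monotone_betw B le B' le' f"
  shows "fibrous_morphism B B id (E_R B le) E_d B' B' id (E_R B' le') E_d f (E_star f)"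
  using assms unfolding fibrous_morphism_def monotone_betw_def E_R_def E_star_def by auto

lemma E_star_id: "fib_mor_eq B B id (\<lambda>x. x) (E_star (\<lambda>x. x)) id fib_id_star"
  unfolding fib_mor_eq_def E_star_def fib_id_star_def by simp

lemma E_star_comp:
  "fib_mor_eq B B'' id (g \<circ> f) (fib_comp_star f (E_star f) (E_star g)) (g \<circ> f) (E_star (g \<circ> f))"
  unfolding fib_mor_eq_def E_star_def fib_comp_star_def by simp

lemma fib_mor_eq_base_eq: "fib_mor_eq B A' p' f fs g gs \<Longrightarrow> b \<in> B \<Longrightarrow> f b = g b"
  unfolding fib_mor_eq_def by blast

lemma E_inj_on_objects:
  assumes "(B, B, id, E_R B le, E_d) = (B', B', id, E_R B' le', E_d)"
  shows "B = B' \<and> (\<forall>x\<in>B. \<forall>y\<in>B. le x y = le' x y)"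
  using assms by (auto simp: E_R_def fun_eq_iff)

lemma initial_section_induced_preorder:
  assumes fp: "fibrous_preorder A B p R d" and u: "initial_section A B p R u"
  shows "is_preorder B (\<lambda>x y. R (u x) y)"
  unfolding is_preorder_def
proof (intro conjI ballI impI)
  fix x assume "x \<in> B"
  moreover have "R (u x) (p (u x))"
    using fp u \<open>x \<in> B\<close> unfolding fibrous_preorder_def initial_section_def by blast
  ultimately show "R (u x) x"
    using u unfolding initial_section_def by simp
next
  fix x y z assume "z \<in> B" and xy: "R (u x) y" and yz: "R (u y) z"
  have "d (u x) y \<in> A" and "p (d (u x) y) = y"
    using fp xy unfolding fibrous_preorder_def by auto
  then have "R (d (u x) y) z"
    using u yz \<open>z \<in> B\<close> unfolding initial_section_def by force
  then show "R (u x) z"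
    using fp xy \<open>z \<in> B\<close> unfolding fibrous_preorder_def by blast
qed

lemma initial_section_equiv_E:
  assumes fp: "fibrous_preorder A B p R d" and u: "initial_section A B p R u"
  shows "fibrous_equiv A B p R d B B id (E_R B (\<lambda>x y. R (u x) y)) E_d"
  unfolding fibrous_equiv_def
proof (intro conjI exI[of _ p] exI[of _ u])
  show "\<forall>a\<in>A. p a \<in> B \<and> id (p a) = p a"
    using fp unfolding fibrous_preorder_def by simp
  show "\<forall>b\<in>B. u b \<in> A \<and> p (u b) = id b"
    using u unfolding initial_section_def by simp
  show "\<forall>a\<in>A. \<forall>b\<in>B. E_R B (\<lambda>x y. R (u x) y) (p a) b \<longrightarrow> R a b"
    using u unfolding initial_section_def E_R_def by blast
  show "\<forall>b\<in>B. \<forall>y\<in>B. R (u b) y \<longrightarrow> E_R B (\<lambda>x y. R (u x) y) b y"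
    unfolding E_R_def by blast
qed simp

text \<open>The map \<gamma> of an equivalence with E(B, \<le>) is an initial section: for a in the fibre
  of b, a R y follows from \<phi> a = b \<le> y, and \<gamma> b R y gives exactly b \<le> y.\<close>

lemma equiv_E_initial_section:
  assumes "fibrous_equiv A B p R d B B id (E_R B le) E_d"
  shows "\<exists>u. initial_section A B p R u"
proof -
  obtain \<phi> \<gamma> where
    \<phi>: "\<forall>a\<in>A. \<phi> a \<in> B \<and> \<phi> a = p a" and
    \<gamma>: "\<forall>b\<in>B. \<gamma> b \<in> A \<and> p (\<gamma> b) = b" and
    \<phi>_reflects: "\<forall>a\<in>A. \<forall>y\<in>B. E_R B le (\<phi> a) y \<longrightarrow> R a y" and
    \<gamma>_reflects: "\<forall>b\<in>B. \<forall>y\<in>B. R (\<gamma> b) y \<longrightarrow> E_R B le b y"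
    using assms unfolding fibrous_equiv_def id_apply by blast
  have "R a y" if "a \<in> A" "y \<in> B" "R (\<gamma> (p a)) y" for a y
  proof -
    have "p a \<in> B" and "\<phi> a = p a"
      using \<phi> \<open>a \<in> A\<close> by auto
    then have "E_R B le (\<phi> a) y"
      using \<gamma>_reflects that by simp
    then show ?thesis
      using \<phi>_reflects that by blast
  qed
  then have "initial_section A B p R \<gamma>"
    unfolding initial_section_def using \<gamma> by blast
  then show ?thesis
    by blast
qed

theorem mainTheorem4:
  shows
  \<comment> \<open>Part 1: E is an embedding (injective-on-objects, faithful functor).\<close>
  "((\<forall>(B::'b set) le. is_preorder B le \<longrightarrow> fibrous_preorder B B id (E_R B le) E_d) \<and>
    (\<forall>(B::'b set) le (B'::'c set) le' f. is_preorder B le \<and> is_preorder B' le' \<and>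
        monotone_betw B le B' le' f \<longrightarrow>
        fibrous_morphism B B id (E_R B le) E_d B' B' id (E_R B' le') E_d f (E_star f)) \<and>
    (\<forall>(B::'b set) le. is_preorder B le \<longrightarrow>
        fib_mor_eq B B id (\<lambda>x. x) (E_star (\<lambda>x. x)) id fib_id_star) \<and>
    (\<forall>(B::'b set) le (B'::'c set) le' (B''::'d set) le'' f g.
        is_preorder B le \<and> is_preorder B' le' \<and> is_preorder B'' le'' \<and>
        monotone_betw B le B' le' f \<and> monotone_betw B' le' B'' le'' g \<longrightarrow>
        fib_mor_eq B B'' id (g \<circ> f) (fib_comp_star f (E_star f) (E_star g))
                               (g \<circ> f) (E_star (g \<circ> f))) \<and>
    (\<forall>(B::'b set) le (B'::'c set) le' f g.
        is_preorder B le \<and> is_preorder B' le' \<and>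
        monotone_betw B le B' le' f \<and> monotone_betw B le B' le' g \<and>
        fib_mor_eq B B' id f (E_star f) g (E_star g) \<longrightarrow> (\<forall>b\<in>B. f b = g b)) \<and>
    (\<forall>(B::'b set) le B' le'. is_preorder B le \<and> is_preorder B' le' \<and>
        (B, B, id, E_R B le, E_d) = (B', B', id, E_R B' le', E_d) \<longrightarrow>
        B = B' \<and> (\<forall>x\<in>B. \<forall>y\<in>B. le x y = le' x y)))
   \<and>
   (\<forall>(A::'a set) (B::'b set) p R d. fibrous_preorder A B p R d \<longrightarrow>
      ((\<exists>le. is_preorder B le \<and> fibrous_equiv A B p R d B B id (E_R B le) E_d) \<longleftrightarrow>
       (\<exists>u. (\<forall>b\<in>B. u b \<in> A \<and> p (u b) = b) \<and>
            (\<forall>a\<in>A. \<forall>y\<in>B. R (u (p a)) y \<longrightarrow> R a y))))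
   \<and>
   (\<forall>(A::'a set) (B::'b set) p R d u. fibrous_preorder A B p R d \<and>
      (\<forall>b\<in>B. u b \<in> A \<and> p (u b) = b) \<and>
      (\<forall>a\<in>A. \<forall>y\<in>B. R (u (p a)) y \<longrightarrow> R a y) \<longrightarrow>
      is_preorder B (\<lambda>x y. R (u x) y) \<and>
      fibrous_equiv A B p R d B B id (E_R B (\<lambda>x y. R (u x) y)) E_d)"
  unfolding initial_section_def[symmetric]
proof (intro conjI allI impI; (elim conjE)?)
  show "(\<exists>le. is_preorder B le \<and> fibrous_equiv A B p R d B B id (E_R B le) E_d) \<longleftrightarrow>
      (\<exists>u. initial_section A B p R u)"
    if "fibrous_preorder A B p R d" for A :: "'a set" and B :: "'b set" and p R d
    using that equiv_E_initial_section initial_section_induced_preorder initial_section_equiv_E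
    by blast
  show "\<forall>b\<in>B. f b = g b" if "fib_mor_eq B B' id f (E_star f) g (E_star g)"
    for B :: "'b set" and B' :: "'c set" and f g
    using fib_mor_eq_base_eq[OF that] by blast
  show "B = B'" and "\<forall>x\<in>B. \<forall>y\<in>B. le x y = le' x y"
    if "(B, B, id, E_R B le, E_d) = (B', B', id, E_R B' le', E_d)" for B B' :: "'b set" and le le'
    using E_inj_on_objects[OF that] by blast+
qed (blast intro: fibrous_preorder_E fibrous_morphism_E E_star_id E_star_comp
       initial_section_induced_preorder initial_section_equiv_E)+

end
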